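(* Let $n\ge 1$, let $X$ be uniformly distributed on $\{0,1\}^n$, and let $Y$ be the output of passing each component of $X$ independently through a binary symmetric channel with crossover probability $\alpha$ (i.e., $Y=X\oplus Z$ with $Z$ having i.i.d. Bernoulli($\alpha$) components independent of $X$). For any balanced Boolean function $f:\{0,1\}^n\to\{0,1\}$ (i.e., $\Pr(f(X)=0)=\tfrac12$) and any $\alpha$ with $\tfrac{1}{2}\left(1-\tfrac{1}{\sqrt{3}}\right)\le\alpha\le\tfrac{1}{2}$, we have \[ I(f(X);Y)\le \frac{\log(e)}{2}(1-2\alpha)^{2}+9\left(1-\frac{\log(e)}{2}\right)(1-2\alpha)^{4}. \]
   Context: $I(\cdot;\cdot)$ denotes mutual information; all logarithms are to base $2$. *)

theory Defs
  imports Complex_Main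
begin

text \<open>The Boolean cube {0,1}^n, represented as Boolean lists of length n
  (False = 0, True = 1).\<close>
definition cube :: "nat \<Rightarrow> bool list set" where
  "cube n = {xs. length xs = n}"

definition hamming :: "bool list \<Rightarrow> bool list \<Rightarrow> nat" where
  "hamming xs ys = card {i. i < length xs \<and> xs ! i \<noteq> ys ! i}"

text \<open>Transition probability of n independent uses of a BSC(alpha):
  P(Y = y | X = x) = alpha^d (1-alpha)^(n-d), d = Hamming distance.\<close>
definition bsc :: "real \<Rightarrow> nat \<Rightarrow> bool list \<Rightarrow> bool list \<Rightarrow> real" where
  "bsc \<alpha> n x y = \<alpha> ^ hamming x y * (1 - \<alpha>) ^ (n - hamming x y)"

definition joint_fY :: "real \<Rightarrow> nat \<Rightarrow> (bool list \<Rightarrow> bool) \<Rightarrow> bool \<Rightarrow> bool list \<Rightarrow> real" where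
  "joint_fY \<alpha> n f b y = (\<Sum>x\<in>{x\<in>cube n. f x = b}. (1 / 2 ^ n) * bsc \<alpha> n x y)"

definition marg_f :: "nat \<Rightarrow> (bool list \<Rightarrow> bool) \<Rightarrow> bool \<Rightarrow> real" where
  "marg_f n f b = real (card {x\<in>cube n. f x = b}) / 2 ^ n"

definition marg_Y :: "real \<Rightarrow> nat \<Rightarrow> bool list \<Rightarrow> real" where
  "marg_Y \<alpha> n y = (\<Sum>x\<in>cube n. (1 / 2 ^ n) * bsc \<alpha> n x y)"

definition MI_fY :: "real \<Rightarrow> nat \<Rightarrow> (bool list \<Rightarrow> bool) \<Rightarrow> real" where
  "MI_fY \<alpha> n f = (\<Sum>b\<in>(UNIV::bool set). \<Sum>y\<in>cube n.
      (let p = joint_fY \<alpha> n f b y in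
        if p = 0 then 0 else p * log 2 (p / (marg_f n f b * marg_Y \<alpha> n y))))"

end

theory Submission
  imports Defs "HOL-Analysis.Harmonic_Numbers" "HOL-Real_Asymp.Real_Asymp"
begin

text \<open>
  Let \<open>g = \<plusminus>1\<close> be the sign of \<open>f\<close> and \<open>t = T\<^sub>\<rho> g\<close> its image under the noise operator
  with \<open>\<rho> = 1 - 2\<alpha>\<close>. Given \<open>Y = y\<close>, the bit \<open>f(X)\<close> is a \<open>(1 \<plusminus> t(y))/2\<close> coin, so
  \<open>I(f(X);Y) = E[\<phi>(t(Y))] / ln 2\<close> with \<open>\<phi>(t) = ((1+t) ln(1+t) + (1-t) ln(1-t))/2\<close>.
  Elementary calculus gives \<open>\<phi>(t) \<le> t\<^sup>2/2 + (ln 2 - 1/2) t\<^sup>4\<close> on \<open>[-1,1]\<close>.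
  By Parseval, \<open>E[t\<^sup>2] = \<Sum>\<^sub>S \<rho>\<^bsup>2|S|\<^esup> \<hat>g(S)\<^sup>2 \<le> \<rho>\<^sup>2\<close> because \<open>\<hat>g(\<emptyset>) = 0\<close>, and a Bonami-type
  induction on \<open>n\<close> gives \<open>E[t\<^sup>4] \<le> (\<Sum>\<^sub>S (3\<rho>\<^sup>2)\<^bsup>|S|\<^esup> \<hat>g(S)\<^sup>2)\<^sup>2 \<le> 9\<rho>\<^sup>4\<close> as long as \<open>3\<rho>\<^sup>2 \<le> 1\<close>,
  which is exactly the lower bound on \<open>\<alpha>\<close>.
\<close>

section \<open>A quartic bound on the entropy gap\<close>

lemma continuous_on_x_ln_x: "continuous_on {0..} (\<lambda>z::real. z * ln z)"
proof -
  have "continuous (at z within {0..}) (\<lambda>z::real. z * ln z)" if "z \<ge> 0" for z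
  proof (cases "z = 0")
    case True
    have "((\<lambda>z::real. z * ln z) \<longlongrightarrow> 0) (at_right 0)" by real_asymp
    then show ?thesis using True by (simp add: continuous_within at_within_Ici_at_right)
  next
    case False
    then have "isCont (\<lambda>z::real. z * ln z) z" using that by (intro continuous_intros) auto
    then show ?thesis using continuous_at_imp_continuous_at_within by blast
  qed
  then show ?thesis by (simp add: continuous_on_eq_continuous_within)
qed

text \<open>\<open>phi t\<close> is \<open>ln 2\<close> minus the binary entropy, in nats, of \<open>(1 + t)/2\<close>.\<close>
definition phi :: "real \<Rightarrow> real" where
  "phi t = ((1 + t) * ln (1 + t) + (1 - t) * ln (1 - t)) / 2"

definition phi_excess :: "real \<Rightarrow> real" where
  "phi_excess t = phi t - t^2/2 - (ln 2 - 1/2) * t^4"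

definition phi_excess' :: "real \<Rightarrow> real" where
  "phi_excess' t = (ln (1 + t) - ln (1 - t))/2 - t - 4 * (ln 2 - 1/2) * t^3"

definition phi_excess'' :: "real \<Rightarrow> real" where
  "phi_excess'' t = 1/(1 - t^2) - 1 - 12 * (ln 2 - 1/2) * t^2"

lemma has_real_derivative_phi_excess:
  "-1 < t \<Longrightarrow> t < 1 \<Longrightarrow> (phi_excess has_real_derivative phi_excess' t) (at t)"
  unfolding phi_excess_def phi_def phi_excess'_def
  by (rule derivative_eq_intros refl | simp)+ (simp add: field_simps)

lemma one_minus_square_pos: "-1 < t \<Longrightarrow> t < 1 \<Longrightarrow> 0 < 1 - t * (t::real)"
  using mult_pos_pos[of "1 - t" "1 + t"] by (simp add: algebra_simps)

lemma has_real_derivative_phi_excess':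
  "-1 < t \<Longrightarrow> t < 1 \<Longrightarrow> (phi_excess' has_real_derivative phi_excess'' t) (at t)"
  unfolding phi_excess''_def phi_excess'_def
  by (rule derivative_eq_intros refl | simp)+
    (use one_minus_square_pos[of t] in \<open>simp add: field_simps power2_eq_square\<close>)

lemma continuous_on_phi: "continuous_on {-1..1} phi"
proof -
  have "continuous_on {-1..1} (\<lambda>t::real. (1 + t) * ln (1 + t))"
    "continuous_on {-1..1} (\<lambda>t::real. (1 - t) * ln (1 - t))"
    by (rule continuous_on_compose2[OF continuous_on_x_ln_x]; auto intro: continuous_intros)+
  then show ?thesis unfolding phi_def by (intro continuous_on_divide continuous_on_add) auto
qed

lemma continuous_on_phi_excess: "continuous_on {0..1} phi_excess"
  unfolding phi_excess_def using continuous_on_subset[OF continuous_on_phi, of "{0..1}"]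
  by (intro continuous_intros) auto

lemma continuous_on_phi_excess': "0 \<le> a \<Longrightarrow> b < 1 \<Longrightarrow> continuous_on {a..b} phi_excess'"
  by (rule continuous_at_imp_continuous_on)
    (auto intro!: DERIV_isCont[OF has_real_derivative_phi_excess'])

lemma phi_excess_0: "phi_excess 0 = 0" and phi_excess'_0: "phi_excess' 0 = 0"
  and phi_excess_1: "phi_excess 1 = 0"
  by (simp_all add: phi_excess_def phi_def phi_excess'_def)

lemma one_less_12_ln2: "1 < 12 * (ln (2::real) - 1/2)"
  using ln2_ge_two_thirds by simp

text \<open>The unique zero of \<open>phi_excess''\<close> in \<open>(0,1)\<close>.\<close>
definition phi_excess_infl :: real where
  "phi_excess_infl = sqrt (1 - 1 / (12 * (ln 2 - 1/2)))"

lemma phi_excess_infl_bounds: "0 < phi_excess_infl" "phi_excess_infl < 1"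
proof -
  have "0 < 1 - 1 / (12 * (ln (2::real) - 1/2))" "1 - 1 / (12 * (ln (2::real) - 1/2)) < 1"
    using one_less_12_ln2 by (auto simp: field_simps)
  then show "0 < phi_excess_infl" "phi_excess_infl < 1" unfolding phi_excess_infl_def by auto
qed

lemma phi_excess''_sign:
  assumes "0 \<le> t" "t < 1"
  shows "t \<le> phi_excess_infl \<Longrightarrow> phi_excess'' t \<le> 0"
    and "phi_excess_infl \<le> t \<Longrightarrow> 0 \<le> phi_excess'' t"
proof -
  define c where "c = 12 * (ln (2::real) - 1/2)"
  have c1: "1 < c" using one_less_12_ln2 c_def by simp
  have p: "0 < 1 - t^2" using assms by (simp add: abs_square_less_1)
  have eq: "phi_excess'' t = t^2 * (1/(1 - t^2) - c)"
    using p unfolding phi_excess''_def c_def by (simp add: field_simps)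
  have sq: "phi_excess_infl^2 = 1 - 1/c"
    using c1 unfolding phi_excess_infl_def c_def by (simp add: field_simps)
  show "phi_excess'' t \<le> 0" if "t \<le> phi_excess_infl"
  proof -
    have "t^2 \<le> phi_excess_infl^2" using that assms by (intro power_mono) auto
    then have "1/(1 - t^2) \<le> c" using sq p c1 by (simp add: field_simps)
    then show ?thesis unfolding eq by (simp add: mult_nonneg_nonpos)
  qed
  show "0 \<le> phi_excess'' t" if "phi_excess_infl \<le> t"
  proof -
    have "phi_excess_infl^2 \<le> t^2" using that phi_excess_infl_bounds by (intro power_mono) auto
    then have "c \<le> 1/(1 - t^2)" using sq p c1 by (simp add: field_simps)
    then show ?thesis unfolding eq by simp
  qed
qed

lemma phi_excess_nonpos_below_infl:
  assumes "0 \<le> t" "t \<le> phi_excess_infl"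
  shows "phi_excess t \<le> 0"
proof -
  have phi_excess'_nonpos: "phi_excess' x \<le> 0" if "0 \<le> x" "x \<le> phi_excess_infl" for x
  proof -
    have "phi_excess' x \<le> phi_excess' 0"
    proof (rule DERIV_nonpos_imp_decreasing_open[OF \<open>0 \<le> x\<close>])
      fix y assume "0 < y" "y < x"
      then show "\<exists>d. DERIV phi_excess' y :> d \<and> d \<le> 0"
        using that phi_excess_infl_bounds
        by (intro exI[of _ "phi_excess'' y"])
          (auto intro!: has_real_derivative_phi_excess' phi_excess''_sign(1))
    qed (use that phi_excess_infl_bounds in \<open>auto intro!: continuous_on_phi_excess'\<close>)
    then show ?thesis using phi_excess'_0 by simp
  qed
  have "phi_excess t \<le> phi_excess 0"
  proof (rule DERIV_nonpos_imp_decreasing_open[OF \<open>0 \<le> t\<close>])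
    fix y assume "0 < y" "y < t"
    then show "\<exists>d. DERIV phi_excess y :> d \<and> d \<le> 0"
      using assms phi_excess_infl_bounds
      by (intro exI[of _ "phi_excess' y"]) (auto intro!: has_real_derivative_phi_excess phi_excess'_nonpos)
  next
    show "continuous_on {0..t} phi_excess"
      using assms phi_excess_infl_bounds by (auto intro: continuous_on_subset[OF continuous_on_phi_excess])
  qed
  then show ?thesis using phi_excess_0 by simp
qed

text \<open>
  On \<open>[phi_excess_infl, 1)\<close> the derivative is increasing, so once \<open>phi_excess\<close> went up between
  \<open>phi_excess_infl\<close> and \<open>t\<close> it would keep increasing up to \<open>phi_excess 1 = 0\<close>.
\<close>
lemma phi_excess_nonpos_above_infl:
  assumes "phi_excess_infl \<le> t" "t < 1"
  shows "phi_excess t \<le> 0"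
proof (rule ccontr)
  assume pos: "\<not> phi_excess t \<le> 0"
  have infl: "phi_excess phi_excess_infl \<le> 0"
    using phi_excess_infl_bounds by (intro phi_excess_nonpos_below_infl) auto
  with pos have lt: "phi_excess_infl < t" using assms by (cases "phi_excess_infl = t") auto
  have "\<And>x. phi_excess_infl \<le> x \<Longrightarrow> x \<le> t \<Longrightarrow> DERIV phi_excess x :> phi_excess' x"
    using phi_excess_infl_bounds assms by (intro has_real_derivative_phi_excess) auto
  from MVT2[OF lt this] obtain z where z: "phi_excess_infl < z" "z < t"
    and mvt: "phi_excess t - phi_excess phi_excess_infl = (t - phi_excess_infl) * phi_excess' z"
    by blast
  have "0 < (t - phi_excess_infl) * phi_excess' z" using mvt infl pos by simp
  then have z_pos: "0 < phi_excess' z" using lt by (simp add: zero_less_mult_iff)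
  have increasing: "phi_excess' z \<le> phi_excess' u" if "z \<le> u" "u < 1" for u
  proof (rule DERIV_nonneg_imp_increasing_open[OF \<open>z \<le> u\<close>])
    fix y assume "z < y" "y < u"
    then show "\<exists>d. DERIV phi_excess' y :> d \<and> 0 \<le> d"
      using that z phi_excess_infl_bounds
      by (intro exI[of _ "phi_excess'' y"])
        (auto intro!: has_real_derivative_phi_excess' phi_excess''_sign(2))
  qed (use that z phi_excess_infl_bounds in \<open>auto intro!: continuous_on_phi_excess'\<close>)
  have "phi_excess t \<le> phi_excess 1"
  proof (rule DERIV_nonneg_imp_increasing_open[of t 1 phi_excess])
    fix y assume "t < y" "y < 1"
    then show "\<exists>d. DERIV phi_excess y :> d \<and> 0 \<le> d"
      using z z_pos increasing[of y] phi_excess_infl_bounds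
      by (intro exI[of _ "phi_excess' y"]) (auto intro!: has_real_derivative_phi_excess)
  next
    show "continuous_on {t..1} phi_excess"
      by (rule continuous_on_subset[OF continuous_on_phi_excess]) (use assms phi_excess_infl_bounds in auto)
  qed (use assms in simp)
  then show False using pos phi_excess_1 by simp
qed

lemma phi_le_quartic:
  assumes "\<bar>t\<bar> \<le> 1"
  shows "phi t \<le> t^2/2 + (ln 2 - 1/2) * t^4"
proof -
  have "phi_excess \<bar>t\<bar> \<le> 0"
  proof (cases "\<bar>t\<bar> \<le> phi_excess_infl")
    case True
    then show ?thesis by (intro phi_excess_nonpos_below_infl) auto
  next
    case False
    then show ?thesis
      using assms phi_excess_1 phi_excess_nonpos_above_infl[of "\<bar>t\<bar>"] by (cases "\<bar>t\<bar> = 1") auto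
  qed
  moreover have "phi \<bar>t\<bar> = phi t" unfolding phi_def by (cases "t \<ge> 0") auto
  ultimately show ?thesis unfolding phi_excess_def by (simp add: power_even_abs)
qed

lemma phi_div_ln2_le:
  assumes "\<bar>t\<bar> \<le> 1"
  shows "phi t / ln 2 \<le> log 2 (exp 1) / 2 * t^2 + (1 - log 2 (exp 1) / 2) * t^4"
proof -
  have ln2: "1/2 < ln (2::real)" using ln2_ge_two_thirds by simp
  have "phi t / ln 2 \<le> (t^2/2 + (ln 2 - 1/2) * t^4) / ln 2"
    using phi_le_quartic[OF assms] ln2 by (intro divide_right_mono) auto
  also have "\<dots> = log 2 (exp 1) / 2 * t^2 + (1 - log 2 (exp 1) / 2) * t^4"
    using ln2 by (simp add: log_def field_simps)
  finally show ?thesis .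
qed

section \<open>Averages over the Boolean cube\<close>

lemma finite_cube: "finite (cube n)"
  unfolding cube_def using finite_lists_length_eq[of "UNIV::bool set" n] by simp

lemma cube_0: "cube 0 = {[]}"
  by (auto simp: cube_def)

lemma cube_Suc: "cube (Suc n) = Cons True ` cube n \<union> Cons False ` cube n"
proof -
  have "xs \<in> Cons True ` cube n \<union> Cons False ` cube n" if "length xs = Suc n" for xs
  proof (cases xs)
    case (Cons a l)
    then have "l \<in> cube n" using that by (simp add: cube_def)
    then show ?thesis using Cons by (cases a) auto
  qed (use that in auto)
  then show ?thesis by (auto simp: cube_def)
qed

lemma sum_cube_Suc:
  "(\<Sum>x\<in>cube (Suc n). F x) = (\<Sum>x\<in>cube n. F (True # x)) + (\<Sum>x\<in>cube n. F (False # x))"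
proof -
  have "(\<Sum>x\<in>cube (Suc n). F x) = (\<Sum>x\<in>Cons True ` cube n. F x) + (\<Sum>x\<in>Cons False ` cube n. F x)"
    unfolding cube_Suc by (rule sum.union_disjoint) (auto simp: finite_cube)
  then show ?thesis by (simp add: sum.reindex)
qed

lemma hamming_Cons: "hamming (a # x) (b # y) = of_bool (a \<noteq> b) + hamming x y"
proof -
  let ?H = "{i. i < length x \<and> x ! i \<noteq> y ! i}"
  have "{i. i < length (a # x) \<and> (a # x) ! i \<noteq> (b # y) ! i} = (if a = b then {} else {0}) \<union> Suc ` ?H"
    by (auto simp: nth_Cons' image_iff split: if_splits)
      (metis Suc_less_eq Suc_pred less_Suc_eq_0_disj)+
  moreover have "card ((if a = b then {} else {0}) \<union> Suc ` ?H) = of_bool (a \<noteq> b) + card ?H"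
    by (subst card_Un_disjoint) (auto simp: card_image)
  ultimately show ?thesis unfolding hamming_def by simp
qed

lemma hamming_le_length: "hamming x y \<le> length x"
  unfolding hamming_def by (rule order.trans[OF card_mono[of "{..<length x}"]]) auto

lemma bsc_Cons:
  assumes "length x = n"
  shows "bsc \<alpha> (Suc n) (a # x) (b # y) = (if a = b then 1 - \<alpha> else \<alpha>) * bsc \<alpha> n x y"
proof -
  have "hamming x y \<le> n" using hamming_le_length assms by metis
  then have "Suc n - hamming x y = Suc (n - hamming x y)" by simp
  then show ?thesis unfolding bsc_def hamming_Cons by auto
qed

definition cube_avg :: "nat \<Rightarrow> (bool list \<Rightarrow> real) \<Rightarrow> real" where
  "cube_avg n h = (\<Sum>x\<in>cube n. h x) / 2^n"

lemma cube_avg_0: "cube_avg 0 h = h []"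
  by (simp add: cube_avg_def cube_0)

lemma cube_avg_Suc: "cube_avg (Suc n) h = cube_avg n (\<lambda>x. (h (True # x) + h (False # x)) / 2)"
  unfolding cube_avg_def sum_cube_Suc sum_divide_distrib[symmetric] sum.distrib by (simp add: field_simps)

lemma cube_avg_cong: "(\<And>x. x \<in> cube n \<Longrightarrow> f x = g x) \<Longrightarrow> cube_avg n f = cube_avg n g"
  unfolding cube_avg_def by (metis sum.cong)

lemma cube_avg_add: "cube_avg n (\<lambda>x. f x + g x) = cube_avg n f + cube_avg n g"
  unfolding cube_avg_def by (simp add: sum.distrib add_divide_distrib)

lemma cube_avg_diff: "cube_avg n (\<lambda>x. f x - g x) = cube_avg n f - cube_avg n g"
  unfolding cube_avg_def by (simp add: sum_subtractf diff_divide_distrib)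

lemma cube_avg_cmult: "cube_avg n (\<lambda>x. c * f x) = c * cube_avg n f"
  unfolding cube_avg_def by (simp add: sum_distrib_left)

lemma cube_avg_const: "cube_avg n (\<lambda>_. c) = c"
  by (induction n) (simp_all add: cube_avg_0 cube_avg_Suc)

lemma cube_avg_mono: "(\<And>x. x \<in> cube n \<Longrightarrow> f x \<le> g x) \<Longrightarrow> cube_avg n f \<le> cube_avg n g"
  unfolding cube_avg_def by (intro divide_right_mono sum_mono) auto

lemma cube_avg_nonneg: "(\<And>x. x \<in> cube n \<Longrightarrow> 0 \<le> f x) \<Longrightarrow> 0 \<le> cube_avg n f"
  unfolding cube_avg_def by (intro divide_nonneg_pos sum_nonneg) auto

lemma cube_avg_Cauchy_Schwarz:
  "(cube_avg n (\<lambda>x. f x * g x))^2 \<le> cube_avg n (\<lambda>x. (f x)^2) * cube_avg n (\<lambda>x. (g x)^2)"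
proof -
  have "(\<Sum>x\<in>cube n. f x * g x)^2 / (2^n)^2
      \<le> (\<Sum>x\<in>cube n. (f x)^2) * (\<Sum>x\<in>cube n. (g x)^2) / (2^n)^2"
    by (intro divide_right_mono Cauchy_Schwarz_ineq_sum) auto
  then show ?thesis by (simp add: cube_avg_def power_divide power2_eq_square)
qed

lemma cube_avg_sq_mult_sq_le:
  assumes f: "cube_avg n (\<lambda>x. (f x)^4) \<le> a^2" and g: "cube_avg n (\<lambda>x. (g x)^4) \<le> b^2"
    and "0 \<le> a" "0 \<le> b"
  shows "cube_avg n (\<lambda>x. (f x)^2 * (g x)^2) \<le> a * b"
proof (rule power2_le_imp_le)
  have pow4: "((x::real)^2)^2 = x^4" for x
    by (simp flip: power_mult)
  have "(cube_avg n (\<lambda>x. (f x)^2 * (g x)^2))^2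
      \<le> cube_avg n (\<lambda>x. (f x)^4) * cube_avg n (\<lambda>x. (g x)^4)"
    using cube_avg_Cauchy_Schwarz[of n "\<lambda>x. (f x)^2" "\<lambda>x. (g x)^2"] by (simp only: pow4)
  also have "\<dots> \<le> a^2 * b^2"
    by (rule mult_mono[OF f g]) (auto intro: cube_avg_nonneg)
  finally show "(cube_avg n (\<lambda>x. (f x)^2 * (g x)^2))^2 \<le> (a * b)^2"
    by (simp add: power_mult_distrib)
  show "0 \<le> a * b" using assms by simp
qed

section \<open>The noise operator and its Fourier weights\<close>

text \<open>
  Since \<open>bsc\<close> is symmetric in \<open>x\<close> and \<open>y\<close>, this is the noise operator
  \<open>T\<^sub>\<rho> h (y) = E[h(y \<oplus> Z)]\<close> with \<open>\<rho> = 1 - 2\<alpha>\<close>; it multiplies the Fourier coefficient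
  \<open>\<hat>h(S)\<close> by \<open>\<rho>\<^bsup>|S|\<^esup>\<close>.
\<close>
definition noise_op :: "real \<Rightarrow> nat \<Rightarrow> (bool list \<Rightarrow> real) \<Rightarrow> bool list \<Rightarrow> real" where
  "noise_op \<alpha> n h y = (\<Sum>x\<in>cube n. bsc \<alpha> n x y * h x)"

lemma noise_op_Nil: "noise_op \<alpha> 0 h [] = h []"
  by (simp add: noise_op_def cube_0 bsc_def hamming_def)

lemma noise_op_Cons:
  "noise_op \<alpha> (Suc n) h (b # y)
    = (1 - \<alpha>) * noise_op \<alpha> n (\<lambda>x. h (b # x)) y + \<alpha> * noise_op \<alpha> n (\<lambda>x. h ((\<not> b) # x)) y"
proof -
  have "noise_op \<alpha> (Suc n) h (b # y)
      = (\<Sum>x\<in>cube n. (if True = b then 1 - \<alpha> else \<alpha>) * bsc \<alpha> n x y * h (True # x))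
      + (\<Sum>x\<in>cube n. (if False = b then 1 - \<alpha> else \<alpha>) * bsc \<alpha> n x y * h (False # x))"
    unfolding noise_op_def sum_cube_Suc
    by (intro arg_cong2[where f="(+)"] sum.cong) (auto simp: bsc_Cons cube_def)
  then show ?thesis unfolding noise_op_def by (cases b) (auto simp: sum_distrib_left mult.assoc)
qed

lemma noise_op_linear:
  "noise_op \<alpha> n (\<lambda>x. a * f x + c * g x) y = a * noise_op \<alpha> n f y + c * noise_op \<alpha> n g y"
  unfolding noise_op_def by (simp add: sum_distrib_left sum.distrib algebra_simps)

lemma noise_op_const: "y \<in> cube n \<Longrightarrow> noise_op \<alpha> n (\<lambda>_. c) y = c"
proof (induction n arbitrary: y)
  case 0
  then show ?case by (simp add: cube_0 noise_op_Nil)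
next
  case (Suc n)
  then obtain b y' where "y = b # y'" "y' \<in> cube n" unfolding cube_Suc by auto
  then show ?case using Suc.IH by (simp add: noise_op_Cons algebra_simps)
qed

lemma noise_op_nonneg:
  "0 \<le> \<alpha> \<Longrightarrow> \<alpha> \<le> 1 \<Longrightarrow> (\<And>x. 0 \<le> h x) \<Longrightarrow> 0 \<le> noise_op \<alpha> n h y"
  unfolding noise_op_def bsc_def by (intro sum_nonneg mult_nonneg_nonneg) auto

definition head_avg :: "(bool list \<Rightarrow> real) \<Rightarrow> bool list \<Rightarrow> real" where
  "head_avg h x = (h (True # x) + h (False # x)) / 2"

definition head_diff :: "(bool list \<Rightarrow> real) \<Rightarrow> bool list \<Rightarrow> real" where
  "head_diff h x = (h (True # x) - h (False # x)) / 2"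

lemma noise_op_Cons_head:
  "noise_op \<alpha> (Suc n) h (True # y) = noise_op \<alpha> n (head_avg h) y + (1 - 2*\<alpha>) * noise_op \<alpha> n (head_diff h) y"
  "noise_op \<alpha> (Suc n) h (False # y) = noise_op \<alpha> n (head_avg h) y - (1 - 2*\<alpha>) * noise_op \<alpha> n (head_diff h) y"
proof -
  have avg: "head_avg h = (\<lambda>x. (1/2) * h (True # x) + (1/2) * h (False # x))"
    and diff: "head_diff h = (\<lambda>x. (1/2) * h (True # x) + (-1/2) * h (False # x))"
    by (auto simp: head_avg_def head_diff_def fun_eq_iff field_simps)
  show "noise_op \<alpha> (Suc n) h (True # y) = noise_op \<alpha> n (head_avg h) y + (1 - 2*\<alpha>) * noise_op \<alpha> n (head_diff h) y"
    "noise_op \<alpha> (Suc n) h (False # y) = noise_op \<alpha> n (head_avg h) y - (1 - 2*\<alpha>) * noise_op \<alpha> n (head_diff h) y"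
    unfolding noise_op_Cons avg diff noise_op_linear by (simp_all add: field_simps)
qed

lemma cube_avg_sq_Suc:
  "cube_avg (Suc n) (\<lambda>x. (h x)^2) = cube_avg n (\<lambda>x. (head_avg h x)^2) + cube_avg n (\<lambda>x. (head_diff h x)^2)"
  unfolding cube_avg_Suc cube_avg_add[symmetric]
  by (rule cube_avg_cong) (simp add: head_avg_def head_diff_def power2_eq_square field_simps)

text \<open>
  \<open>noise_weight l n h = \<Sum>\<^sub>S l\<^bsup>|S|\<^esup> \<hat>h(S)\<^sup>2\<close>, computed by splitting off the first coordinate:
  the coefficients of \<open>head_avg h\<close> and \<open>head_diff h\<close> are those \<open>\<hat>h(S)\<close> with \<open>0 \<notin> S\<close> and
  \<open>0 \<in> S\<close> respectively.
\<close>
fun noise_weight :: "real \<Rightarrow> nat \<Rightarrow> (bool list \<Rightarrow> real) \<Rightarrow> real" where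
  "noise_weight l 0 h = (h [])^2"
| "noise_weight l (Suc n) h = noise_weight l n (head_avg h) + l * noise_weight l n (head_diff h)"

lemma noise_weight_nonneg: "0 \<le> l \<Longrightarrow> 0 \<le> noise_weight l n h"
  by (induction n arbitrary: h) auto

lemma noise_weight_le_cube_avg_sq:
  "0 \<le> l \<Longrightarrow> l \<le> 1 \<Longrightarrow> noise_weight l n h \<le> cube_avg n (\<lambda>x. (h x)^2)"
proof (induction n arbitrary: h)
  case 0
  then show ?case by (simp add: cube_avg_0)
next
  case (Suc n)
  have "l * noise_weight l n (head_diff h) \<le> noise_weight l n (head_diff h)"
    using Suc.prems noise_weight_nonneg[of l n "head_diff h"] by (simp add: mult_left_le_one_le)
  then show ?case using Suc.IH[of "head_avg h"] Suc.IH[of "head_diff h"] Suc.prems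
    by (simp add: cube_avg_sq_Suc)
qed

text \<open>For mean zero \<open>h\<close> the coefficient \<open>\<hat>h(\<emptyset>)\<close> vanishes, so every weight carries a factor \<open>l\<close>.\<close>
lemma noise_weight_le_of_mean_zero:
  "0 \<le> l \<Longrightarrow> l \<le> 1 \<Longrightarrow> cube_avg n h = 0 \<Longrightarrow> noise_weight l n h \<le> l * cube_avg n (\<lambda>x. (h x)^2)"
proof (induction n arbitrary: h)
  case 0
  then show ?case by (simp add: cube_avg_0)
next
  case (Suc n)
  have "cube_avg n (head_avg h) = 0" using Suc.prems by (simp add: cube_avg_Suc head_avg_def[abs_def])
  then have "noise_weight l n (head_avg h) \<le> l * cube_avg n (\<lambda>x. (head_avg h x)^2)"
    using Suc.IH Suc.prems by auto
  moreover have "l * noise_weight l n (head_diff h) \<le> l * cube_avg n (\<lambda>x. (head_diff h x)^2)"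
    using Suc.prems noise_weight_le_cube_avg_sq by (intro mult_left_mono) auto
  ultimately show ?case by (simp add: cube_avg_sq_Suc algebra_simps)
qed

lemma cube_avg_noise_op_sq:
  "cube_avg n (\<lambda>y. (noise_op \<alpha> n h y)^2) = noise_weight ((1 - 2*\<alpha>)^2) n h"
proof (induction n arbitrary: h)
  case 0
  then show ?case by (simp add: cube_avg_0 noise_op_Nil)
next
  case (Suc n)
  let ?A = "noise_op \<alpha> n (head_avg h)" and ?B = "noise_op \<alpha> n (head_diff h)" and ?r = "1 - 2*\<alpha>"
  have "cube_avg (Suc n) (\<lambda>y. (noise_op \<alpha> (Suc n) h y)^2) = cube_avg n (\<lambda>x. (?A x)^2 + ?r^2 * (?B x)^2)"
    unfolding cube_avg_Suc noise_op_Cons_head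
    by (rule cube_avg_cong) (simp add: power2_eq_square field_simps)
  then show ?case by (simp add: cube_avg_add cube_avg_cmult Suc.IH)
qed

text \<open>
  The Bonami-type step: averaging \<open>(A \<plusminus> \<rho>B)\<^sup>4\<close> over the sign gives
  \<open>A\<^sup>4 + 6\<rho>\<^sup>2A\<^sup>2B\<^sup>2 + \<rho>\<^sup>4B\<^sup>4 \<le> A\<^sup>4 + 2lA\<^sup>2B\<^sup>2 + l\<^sup>2B\<^sup>4\<close> for \<open>l = 3\<rho>\<^sup>2\<close>, and the middle term is
  handled by Cauchy--Schwarz, so the bound \<open>(N\<^sub>0 + l N\<^sub>1)\<^sup>2\<close> propagates.
\<close>
lemma cube_avg_noise_op_pow4_le:
  "cube_avg n (\<lambda>y. (noise_op \<alpha> n h y)^4) \<le> (noise_weight (3 * (1 - 2*\<alpha>)^2) n h)^2"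
proof (induction n arbitrary: h)
  case 0
  then show ?case by (simp add: cube_avg_0 noise_op_Nil flip: power_mult)
next
  case (Suc n)
  let ?A = "noise_op \<alpha> n (head_avg h)" and ?B = "noise_op \<alpha> n (head_diff h)" and ?r = "1 - 2*\<alpha>"
  let ?l = "3 * (1 - 2*\<alpha>)^2"
  define N0 where "N0 = noise_weight ?l n (head_avg h)"
  define N1 where "N1 = noise_weight ?l n (head_diff h)"
  have N: "0 \<le> N0" "0 \<le> N1" unfolding N0_def N1_def by (simp_all add: noise_weight_nonneg)
  have A4: "cube_avg n (\<lambda>y. (?A y)^4) \<le> N0^2" and B4: "cube_avg n (\<lambda>y. (?B y)^4) \<le> N1^2"
    unfolding N0_def N1_def by (rule Suc.IH)+
  have "cube_avg (Suc n) (\<lambda>y. (noise_op \<alpha> (Suc n) h y)^4)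
      = cube_avg n (\<lambda>x. (?A x)^4 + 6 * ?r^2 * ((?A x)^2 * (?B x)^2) + ?r^4 * (?B x)^4)"
    unfolding cube_avg_Suc noise_op_Cons_head
    by (rule cube_avg_cong) (simp add: power4_eq_xxxx power2_eq_square field_simps)
  also have "\<dots> \<le> cube_avg n (\<lambda>x. (?A x)^4 + (2 * ?l) * ((?A x)^2 * (?B x)^2) + ?l^2 * (?B x)^4)"
    by (intro cube_avg_mono add_mono mult_right_mono) (simp_all add: power_mult_distrib flip: power_mult)
  also have "\<dots> = cube_avg n (\<lambda>x. (?A x)^4) + (2 * ?l) * cube_avg n (\<lambda>x. (?A x)^2 * (?B x)^2)
      + ?l^2 * cube_avg n (\<lambda>x. (?B x)^4)"
    by (simp only: cube_avg_add cube_avg_cmult)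
  also have "\<dots> \<le> N0^2 + (2 * ?l) * (N0 * N1) + ?l^2 * N1^2"
    using A4 B4 N cube_avg_sq_mult_sq_le[OF A4 B4 N]
    by (intro add_mono mult_left_mono) simp_all
  also have "\<dots> = (noise_weight ?l (Suc n) h)^2"
    by (simp add: N0_def N1_def power2_eq_square algebra_simps)
  finally show ?case .
qed

lemma cube_avg_noise_op_sq_le:
  assumes "cube_avg n h = 0" "(1 - 2*\<alpha>)^2 \<le> 1"
  shows "cube_avg n (\<lambda>y. (noise_op \<alpha> n h y)^2) \<le> (1 - 2*\<alpha>)^2 * cube_avg n (\<lambda>x. (h x)^2)"
  unfolding cube_avg_noise_op_sq using assms by (intro noise_weight_le_of_mean_zero) auto

lemma cube_avg_noise_op_pow4_le_of_mean_zero: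
  assumes "cube_avg n h = 0" "3 * (1 - 2*\<alpha>)^2 \<le> 1"
  shows "cube_avg n (\<lambda>y. (noise_op \<alpha> n h y)^4) \<le> 9 * (1 - 2*\<alpha>)^4 * (cube_avg n (\<lambda>x. (h x)^2))^2"
proof -
  let ?l = "3 * (1 - 2*\<alpha>)^2"
  have "noise_weight ?l n h \<le> ?l * cube_avg n (\<lambda>x. (h x)^2)"
    using assms by (intro noise_weight_le_of_mean_zero) auto
  then have "(noise_weight ?l n h)^2 \<le> (?l * cube_avg n (\<lambda>x. (h x)^2))^2"
    by (intro power_mono noise_weight_nonneg) auto
  with cube_avg_noise_op_pow4_le[of n \<alpha> h] show ?thesis
    by (simp add: power_mult_distrib flip: power_mult)
qed

section \<open>Mutual information of a balanced function\<close>

definition bool_sign :: "bool \<Rightarrow> real" where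
  "bool_sign b = (if b then 1 else -1)"

lemma of_bool_eq_bool_sign: "of_bool (a = b) = (1 + bool_sign b * bool_sign a) / (2::real)"
  by (simp add: bool_sign_def)

lemma marg_f_eq_cube_avg: "marg_f n f b = cube_avg n (\<lambda>x. of_bool (f x = b))"
  unfolding marg_f_def cube_avg_def
  using sum.inter_filter[OF finite_cube, where g = "\<lambda>_. 1::real" and P = "\<lambda>x. f x = b"] by (simp add: of_bool_def)

lemma joint_fY_eq_noise_op: "joint_fY \<alpha> n f b y = noise_op \<alpha> n (\<lambda>x. of_bool (f x = b)) y / 2^n"
  unfolding joint_fY_def noise_op_def sum_distrib_left[symmetric]
  using sum.inter_filter[OF finite_cube, where g = "\<lambda>x. bsc \<alpha> n x y" and P = "\<lambda>x. f x = b"]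
  by (simp add: of_bool_def if_distrib cong: if_cong)

lemma marg_Y_eq: "y \<in> cube n \<Longrightarrow> marg_Y \<alpha> n y = 1 / 2^n"
  using noise_op_const[of y n \<alpha> 1] unfolding marg_Y_def noise_op_def
  by (simp add: sum_divide_distrib[symmetric])

lemma noise_op_indicator:
  "y \<in> cube n \<Longrightarrow>
    noise_op \<alpha> n (\<lambda>x. of_bool (f x = b)) y = (1 + bool_sign b * noise_op \<alpha> n (\<lambda>x. bool_sign (f x)) y) / 2"
  unfolding of_bool_eq_bool_sign add_divide_distrib
  using noise_op_linear[of \<alpha> n "1/2" "\<lambda>_. 1" "bool_sign b / 2" "\<lambda>x. bool_sign (f x)" y]
  by (simp add: noise_op_const)

lemma marg_f_balanced: "marg_f n f False = 1/2 \<Longrightarrow> marg_f n f b = 1/2"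
proof -
  assume balanced: "marg_f n f False = 1/2"
  have "(\<lambda>x. of_bool (f x = True) + of_bool (f x = False)) = (\<lambda>_. 1::real)"
    by auto
  then have "marg_f n f True + marg_f n f False = 1"
    unfolding marg_f_eq_cube_avg cube_avg_add[symmetric] by (simp add: cube_avg_const)
  with balanced show ?thesis by (cases b) simp_all
qed

lemma cube_avg_bool_sign_balanced:
  assumes "marg_f n f False = 1/2"
  shows "cube_avg n (\<lambda>x. bool_sign (f x)) = 0"
proof -
  have "cube_avg n (\<lambda>x. bool_sign (f x)) = marg_f n f True - marg_f n f False"
    unfolding marg_f_eq_cube_avg cube_avg_diff[symmetric] by (rule cube_avg_cong) (simp add: bool_sign_def)
  then show ?thesis using marg_f_balanced[OF assms] by simp
qed

lemma abs_noise_op_bool_sign_le: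
  assumes "0 \<le> \<alpha>" "\<alpha> \<le> 1" "y \<in> cube n"
  shows "\<bar>noise_op \<alpha> n (\<lambda>x. bool_sign (f x)) y\<bar> \<le> 1"
proof -
  have "0 \<le> noise_op \<alpha> n (\<lambda>x. of_bool (f x = b)) y" for b
    by (rule noise_op_nonneg[OF assms(1,2)]) simp
  then have "0 \<le> 1 + bool_sign b * noise_op \<alpha> n (\<lambda>x. bool_sign (f x)) y" for b
    unfolding noise_op_indicator[OF assms(3)] by simp
  from this[of True] this[of False] show ?thesis by (simp add: bool_sign_def abs_le_iff)
qed

lemma mutual_information_summand_eq:
  fixes u :: real
  assumes "0 \<le> u"
  shows "(let p = u / 2 / 2^m in if p = 0 then 0 else p * log 2 (p / (1/2 * (1/2^m))))
    = u / 2 * ln u / ln 2 / 2^m"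
proof (cases "u = 0")
  case False
  then have "u / 2 / 2^m \<noteq> 0" "u / 2 / 2^m / (1/2 * (1/2^m)) = u" using assms by auto
  then show ?thesis by (simp add: Let_def log_def)
qed simp

lemma sum_bool_sign_eq_phi: "(\<Sum>b\<in>UNIV. (1 + bool_sign b * u) / 2 * ln (1 + bool_sign b * u)) = phi u"
  by (simp add: UNIV_bool bool_sign_def phi_def field_simps)

lemma MI_fY_eq_cube_avg_phi:
  assumes balanced: "marg_f n f False = 1/2" and "0 \<le> \<alpha>" "\<alpha> \<le> 1"
  shows "MI_fY \<alpha> n f = cube_avg n (\<lambda>y. phi (noise_op \<alpha> n (\<lambda>x. bool_sign (f x)) y) / ln 2)"
proof -
  let ?t = "noise_op \<alpha> n (\<lambda>x. bool_sign (f x))"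
  have summand: "(let p = joint_fY \<alpha> n f b y in
        if p = 0 then 0 else p * log 2 (p / (marg_f n f b * marg_Y \<alpha> n y)))
      = (1 + bool_sign b * ?t y) / 2 * ln (1 + bool_sign b * ?t y) / ln 2 / 2^n"
    if y: "y \<in> cube n" for b y
  proof -
    have "0 \<le> 1 + bool_sign b * ?t y"
      using abs_noise_op_bool_sign_le[OF assms(2,3) y, of f] by (simp add: bool_sign_def abs_le_iff)
    then show ?thesis
      unfolding joint_fY_eq_noise_op noise_op_indicator[OF y] marg_f_balanced[OF balanced] marg_Y_eq[OF y]
      by (rule mutual_information_summand_eq)
  qed
  have "MI_fY \<alpha> n f
      = (\<Sum>b\<in>UNIV. \<Sum>y\<in>cube n. (1 + bool_sign b * ?t y) / 2 * ln (1 + bool_sign b * ?t y) / ln 2 / 2^n)"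
    unfolding MI_fY_def by (intro sum.cong refl) (rule summand)
  also have "\<dots> = (\<Sum>y\<in>cube n. \<Sum>b\<in>UNIV. (1 + bool_sign b * ?t y) / 2 * ln (1 + bool_sign b * ?t y) / ln 2 / 2^n)"
    by (rule sum.swap)
  also have "\<dots> = (\<Sum>y\<in>cube n. phi (?t y) / ln 2 / 2^n)"
    by (simp only: sum_divide_distrib[symmetric] sum_bool_sign_eq_phi)
  also have "\<dots> = cube_avg n (\<lambda>y. phi (?t y) / ln 2)"
    by (simp add: cube_avg_def sum_divide_distrib)
  finally show ?thesis .
qed

lemma crossover_range:
  fixes \<alpha> :: real
  assumes "(1 - 1 / sqrt 3) / 2 \<le> \<alpha>" and "\<alpha> \<le> 1 / 2"
  shows "0 \<le> \<alpha>" and "\<alpha> \<le> 1" and "3 * (1 - 2 * \<alpha>)^2 \<le> 1"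
proof -
  define s :: real where "s = 1 / sqrt 3"
  have s: "0 \<le> s" "s \<le> 1" "s^2 = 1/3" unfolding s_def by (simp_all add: power_divide)
  show "0 \<le> \<alpha>" using assms(1) s unfolding s_def[symmetric] by (simp add: field_simps)
  show "\<alpha> \<le> 1" using assms(2) by simp
  have "(1 - 2 * \<alpha>)^2 \<le> s^2"
    using assms unfolding s_def[symmetric] by (intro power_mono) (simp_all add: field_simps)
  then show "3 * (1 - 2 * \<alpha>)^2 \<le> 1" using s by simp
qed

lemma log2_exp1_bounds: "0 \<le> log 2 (exp 1) / 2" "0 \<le> 1 - log 2 (exp 1) / 2"
proof -
  have ln2: "1/2 < ln (2::real)" using ln2_ge_two_thirds by simp
  then have "1 / ln 2 \<le> (2::real)" by (simp add: divide_le_eq)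
  moreover have "log 2 (exp 1) = 1 / ln 2" by (simp add: log_def)
  ultimately show "0 \<le> log 2 (exp 1) / 2" "0 \<le> 1 - log 2 (exp 1) / 2" using ln2 by simp_all
qed

lemma noise_op_bool_sign_moments:
  assumes "marg_f n f False = 1/2" and "3 * (1 - 2 * \<alpha>)^2 \<le> 1"
  shows "cube_avg n (\<lambda>y. (noise_op \<alpha> n (\<lambda>x. bool_sign (f x)) y)^2) \<le> (1 - 2 * \<alpha>)^2"
    and "cube_avg n (\<lambda>y. (noise_op \<alpha> n (\<lambda>x. bool_sign (f x)) y)^4) \<le> 9 * (1 - 2 * \<alpha>)^4"
proof -
  have mean: "cube_avg n (\<lambda>x. bool_sign (f x)) = 0"
    using assms(1) by (rule cube_avg_bool_sign_balanced)
  have "(\<lambda>x. (bool_sign (f x))^2) = (\<lambda>_. 1)" by (simp add: fun_eq_iff bool_sign_def)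
  then have energy: "cube_avg n (\<lambda>x. (bool_sign (f x))^2) = 1" by (simp add: cube_avg_const)
  have "(1 - 2 * \<alpha>)^2 \<le> 1" using assms(2) by simp
  with cube_avg_noise_op_sq_le[OF mean] energy
  show "cube_avg n (\<lambda>y. (noise_op \<alpha> n (\<lambda>x. bool_sign (f x)) y)^2) \<le> (1 - 2 * \<alpha>)^2" by simp
  from cube_avg_noise_op_pow4_le_of_mean_zero[OF mean assms(2)] energy
  show "cube_avg n (\<lambda>y. (noise_op \<alpha> n (\<lambda>x. bool_sign (f x)) y)^4) \<le> 9 * (1 - 2 * \<alpha>)^4" by simp
qed

theorem theorem1:
  fixes n :: nat and \<alpha> :: real and f :: "bool list \<Rightarrow> bool"
  assumes "n \<ge> 1"
    and "marg_f n f False = 1 / 2"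
    and "(1 - 1 / sqrt 3) / 2 \<le> \<alpha>" and "\<alpha> \<le> 1 / 2"
  shows "MI_fY \<alpha> n f \<le> log 2 (exp 1) / 2 * (1 - 2 * \<alpha>) ^ 2
           + 9 * (1 - log 2 (exp 1) / 2) * (1 - 2 * \<alpha>) ^ 4"
proof -
  define t where "t = noise_op \<alpha> n (\<lambda>x. bool_sign (f x))"
  define L where "L = log 2 (exp 1)"
  note \<alpha> = crossover_range[OF assms(3,4)]
  have "MI_fY \<alpha> n f = cube_avg n (\<lambda>y. phi (t y) / ln 2)"
    unfolding t_def using assms(2) \<alpha>(1,2) by (rule MI_fY_eq_cube_avg_phi)
  also have "\<dots> \<le> cube_avg n (\<lambda>y. L / 2 * (t y)^2 + (1 - L / 2) * (t y)^4)"
    unfolding L_def t_def using \<alpha>(1,2)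
    by (intro cube_avg_mono phi_div_ln2_le abs_noise_op_bool_sign_le)
  also have "\<dots> = L / 2 * cube_avg n (\<lambda>y. (t y)^2) + (1 - L / 2) * cube_avg n (\<lambda>y. (t y)^4)"
    by (simp only: cube_avg_add cube_avg_cmult)
  also have "\<dots> \<le> L / 2 * (1 - 2 * \<alpha>)^2 + (1 - L / 2) * (9 * (1 - 2 * \<alpha>)^4)"
    using noise_op_bool_sign_moments[OF assms(2) \<alpha>(3), folded t_def] log2_exp1_bounds[folded L_def]
    by (intro add_mono mult_left_mono) auto
  finally show ?thesis unfolding L_def by (simp only: mult.assoc mult.left_commute)
qed

end
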